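(* Let $B$ be an integral domain satisfying the ascending chain condition on principal ideals, $p$ a prime element of $B$, $A$ a subring of $B$ and $\pi:B\to A$ a retraction. If $\pi(p)$ is not a unit in $A$, then either $pB\cap A=(0)$ or $pB\cap A=\pi(p)A$. In particular, if moreover $pB\cap A\neq(0)$, then $\pi(p)$ is a prime element of $A$.
   Context: A retraction $\pi:B\to A$ is a ring homomorphism onto the subring $A$ restricting to the identity on $A$. *)

theory Defs
  imports "HOL-Computational_Algebra.Factorial_Ring"
begin

text \<open>ACC on principal ideals: every chain a0 B \<subseteq> a1 B \<subseteq> ... (i.e. a(n+1) dvd a n)
  stabilises (eventually a n dvd a(n+1) as well).\<close>
definition acc_principal :: "('a::comm_semiring_1) itself \<Rightarrow> bool" where
  "acc_principal _ \<longleftrightarrow> (\<forall>f::nat \<Rightarrow> 'a. (\<forall>n. f (Suc n) dvd f n) \<longrightarrow>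
      (\<exists>N. \<forall>n\<ge>N. f n dvd f (Suc n)))"

definition is_subring :: "('a::comm_ring_1) set \<Rightarrow> bool" where
  "is_subring A \<longleftrightarrow> 0 \<in> A \<and> 1 \<in> A \<and> (\<forall>x\<in>A. \<forall>y\<in>A. x + y \<in> A \<and> x * y \<in> A \<and> - x \<in> A)"

definition is_retraction :: "('a::comm_ring_1 \<Rightarrow> 'a) \<Rightarrow> 'a set \<Rightarrow> bool" where
  "is_retraction \<pi> A \<longleftrightarrow>
     (\<forall>x y. \<pi> (x + y) = \<pi> x + \<pi> y) \<and> (\<forall>x y. \<pi> (x * y) = \<pi> x * \<pi> y) \<and> \<pi> 1 = 1 \<and>
     (\<forall>x. \<pi> x \<in> A) \<and> (\<forall>a\<in>A. \<pi> a = a)"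

definition dvd_in :: "'a set \<Rightarrow> ('a::comm_ring_1) \<Rightarrow> 'a \<Rightarrow> bool" where
  "dvd_in A a b \<longleftrightarrow> (\<exists>c\<in>A. b = a * c)"

definition unit_in :: "'a set \<Rightarrow> ('a::comm_ring_1) \<Rightarrow> bool" where
  "unit_in A u \<longleftrightarrow> dvd_in A u 1"

definition prime_elem_in :: "'a set \<Rightarrow> ('a::comm_ring_1) \<Rightarrow> bool" where
  "prime_elem_in A q \<longleftrightarrow> q \<in> A \<and> q \<noteq> 0 \<and> \<not> unit_in A q \<and>
     (\<forall>a\<in>A. \<forall>b\<in>A. dvd_in A q (a * b) \<longrightarrow> dvd_in A q a \<or> dvd_in A q b)"

end

theory Submission
  imports Defs
begin

text \<open>Every element of \<open>pB \<inter> A\<close> is \<open>\<pi>(p b) = \<pi>(p) \<pi>(b)\<close>, so \<open>pB \<inter> A \<subseteq> \<pi>(p) A\<close>, and equality holds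
  as soon as \<open>p\<close> divides \<open>\<pi>(p)\<close>. If it did not, primality of \<open>p\<close> would let every nonzero
  \<open>x \<in> pB \<inter> A\<close> be written \<open>\<pi>(p) y\<close> with \<open>y\<close> again a nonzero element of \<open>pB \<inter> A\<close>; iterating gives
  an ascending chain of principal ideals, and its stabilisation forces \<open>\<pi>(p)\<close> to be a unit.\<close>

lemma acc_principal_divisor_unit:
  fixes u :: "'a::idom"
  assumes acc: "acc_principal TYPE('a)"
    and S_nonzero: "0 \<notin> S" and "x \<in> S"
    and S_divisible: "\<And>x. x \<in> S \<Longrightarrow> \<exists>y\<in>S. x = u * y"
  shows "u dvd 1"
proof -
  obtain g where g: "\<And>x. x \<in> S \<Longrightarrow> g x \<in> S \<and> x = u * g x"
    using S_divisible by metis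
  define f where "f n = (g ^^ n) x" for n
  have f_in_S: "f n \<in> S" for n
    by (induction n) (use \<open>x \<in> S\<close> g in \<open>auto simp: f_def\<close>)
  have f_step: "f n = u * f (Suc n)" for n
    using g[OF f_in_S[of n]] by (simp add: f_def)
  have "\<forall>n. f (Suc n) dvd f n"
    using f_step by (metis dvd_triv_right)
  then obtain N where "f N dvd f (Suc N)"
    using acc unfolding acc_principal_def by blast
  then obtain c where c: "f (Suc N) = f N * c" by (elim dvdE)
  have "f N * 1 = f N * (u * c)"
    using f_step[of N] unfolding c by (simp add: ac_simps)
  moreover have "f N \<noteq> 0" using f_in_S[of N] S_nonzero by metis
  ultimately have "1 = u * c" by simp
  then show ?thesis by (metis dvd_triv_left)
qed

context
  fixes A :: "'a::comm_ring_1 set" and \<pi> :: "'a \<Rightarrow> 'a"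
  assumes retraction: "is_retraction \<pi> A"
begin

lemma retraction_mult: "\<pi> (x * y) = \<pi> x * \<pi> y"
  and retraction_one: "\<pi> 1 = 1"
  and retraction_in: "\<pi> x \<in> A"
  and retraction_fixes: "a \<in> A \<Longrightarrow> \<pi> a = a"
  using retraction unfolding is_retraction_def by auto

lemma unit_in_retraction:
  assumes "u \<in> A" and "u dvd 1"
  shows "unit_in A u"
proof -
  obtain c where "1 = u * c" using \<open>u dvd 1\<close> by (elim dvdE)
  then have "1 = u * \<pi> c"
    using retraction_mult[of u c] retraction_one retraction_fixes[OF \<open>u \<in> A\<close>] by simp
  then show ?thesis
    unfolding unit_in_def dvd_in_def using retraction_in by blast
qed

lemma retraction_multiple_in:
  assumes "x \<in> A" and "x = p * b"
  shows "x = \<pi> p * \<pi> b"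
  using assms retraction_fixes retraction_mult by metis

lemma retraction_contraction_subset:
  "{x \<in> A. p dvd x} \<subseteq> {\<pi> p * a | a. a \<in> A}"
  using retraction_multiple_in retraction_in by blast

lemma retraction_contraction_eq:
  assumes "is_subring A" and "p dvd \<pi> p"
  shows "{x \<in> A. p dvd x} = {\<pi> p * a | a. a \<in> A}"
proof
  show "{\<pi> p * a | a. a \<in> A} \<subseteq> {x \<in> A. p dvd x}"
    using assms retraction_in unfolding is_subring_def by (auto intro: dvd_mult2)
qed (rule retraction_contraction_subset)

end

lemma prime_elem_dvd_retraction:
  fixes p :: "'a::idom"
  assumes acc: "acc_principal TYPE('a)" and retraction: "is_retraction \<pi> A" and "prime_elem p"
    and not_unit: "\<not> unit_in A (\<pi> p)"
    and "a \<in> A" "a \<noteq> 0" "p dvd a"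
  shows "p dvd \<pi> p"
proof (rule ccontr)
  assume not_dvd: "\<not> p dvd \<pi> p"
  define S where "S = {x \<in> A. x \<noteq> 0 \<and> p dvd x}"
  have "\<exists>y\<in>S. x = \<pi> p * y" if "x \<in> S" for x
  proof -
    obtain b where "x \<in> A" "x \<noteq> 0" "x = p * b"
      using \<open>x \<in> S\<close> unfolding S_def by blast
    then have x: "x = \<pi> p * \<pi> b" by (metis retraction_multiple_in[OF retraction])
    have "p dvd \<pi> b"
      using \<open>x = p * b\<close> x not_dvd \<open>prime_elem p\<close> by (metis dvd_triv_left prime_elem_dvd_mult_iff)
    with x \<open>x \<noteq> 0\<close> retraction_in[OF retraction] show ?thesis unfolding S_def by auto
  qed
  then have "\<pi> p dvd 1"
    using acc_principal_divisor_unit[OF acc, of S a] assms(5-7) unfolding S_def by blast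
  then show False
    using unit_in_retraction[OF retraction] retraction_in[OF retraction] not_unit by blast
qed

lemma prime_elem_in_of_contraction:
  fixes p :: "'a::idom"
  assumes "prime_elem p" and "p dvd q" and "q \<in> A" and "q \<noteq> 0" and "\<not> unit_in A q"
    and contraction: "{x \<in> A. p dvd x} = {q * a | a. a \<in> A}"
  shows "prime_elem_in A q"
  unfolding prime_elem_in_def
proof (intro conjI ballI impI)
  fix x y assume "x \<in> A" "y \<in> A" "dvd_in A q (x * y)"
  with \<open>p dvd q\<close> have "p dvd x * y"
    unfolding dvd_in_def by (auto intro: dvd_mult2)
  then have "p dvd x \<or> p dvd y"
    using \<open>prime_elem p\<close> prime_elem_dvd_mult_iff by blast
  then show "dvd_in A q x \<or> dvd_in A q y"
    using contraction \<open>x \<in> A\<close> \<open>y \<in> A\<close> unfolding dvd_in_def by blast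
qed (use assms in blast)+

theorem lemma6p4:
  fixes p :: "'b::idom" and A :: "'b set" and \<pi> :: "'b \<Rightarrow> 'b"
  assumes "acc_principal TYPE('b)"
    and "prime_elem p"
    and "is_subring A"
    and "is_retraction \<pi> A"
    and "\<not> unit_in A (\<pi> p)"
  shows "({x \<in> A. p dvd x} = {0} \<or> {x \<in> A. p dvd x} = {\<pi> p * a | a. a \<in> A})
         \<and> ({x \<in> A. p dvd x} \<noteq> {0} \<longrightarrow> prime_elem_in A (\<pi> p))"
proof (cases "{x \<in> A. p dvd x} = {0}")
  case False
  moreover have "0 \<in> A"
    using assms(3) unfolding is_subring_def by blast
  ultimately obtain a where "a \<in> A" "a \<noteq> 0" "p dvd a"
    by blast
  then have "p dvd \<pi> p"
    by (rule prime_elem_dvd_retraction[OF assms(1,4,2,5)])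
  then have contraction: "{x \<in> A. p dvd x} = {\<pi> p * a | a. a \<in> A}"
    by (rule retraction_contraction_eq[OF assms(4,3)])
  then have "a \<in> {\<pi> p * c | c. c \<in> A}"
    using \<open>a \<in> A\<close> \<open>p dvd a\<close> by blast
  then have "\<pi> p \<noteq> 0"
    using \<open>a \<noteq> 0\<close> by auto
  then have "prime_elem_in A (\<pi> p)"
    using prime_elem_in_of_contraction[OF assms(2) \<open>p dvd \<pi> p\<close> retraction_in[OF assms(4)]
        _ assms(5) contraction]
    by blast
  with contraction show ?thesis by blast
qed blast

end
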